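(* Let $X=(X_1,\dots,X_d)$ be a random vector with values in $\{0,1\}^d$ such that $\mathbb{P}(X=x)>0$ for every $x\in\{0,1\}^d$, and let $G:\{0,1\}^d\to\mathbb{R}$. Let $X^{(1)},\dots,X^{(n)}$ be i.i.d. copies of $X$. Define $\boldsymbol g(x):=(e_A(x_A)G(x))_{A\subseteq D}\in\mathbb{R}^{2^d}$, $\boldsymbol\mu:=\mathbb{E}[\boldsymbol g(X)]$, $\widehat{\boldsymbol\mu}_n:=\frac1n\sum_{i=1}^n\boldsymbol g(X^{(i)})$, $\Gamma_{A,B}:=\mathbb{E}[e_A(X_A)e_B(X_B)]$, $\widehat{\boldsymbol\beta}_n:=\Gamma^{-1}\widehat{\boldsymbol\mu}_n$, $\boldsymbol e(x):=(e_A(x_A))_{A\subseteq D}$ and $\widehat G_n(x):=\widehat{\boldsymbol\beta}_n^{\top}\boldsymbol e(x)$. Let $\|\boldsymbol g-\boldsymbol\mu\|_\infty:=\sup_{x\in\{0,1\}^d}\|\boldsymbol g(x)-\boldsymbol\mu\|_2$ and let $\lambda_{\min}(\Gamma)$ be the smallest eigenvalue of $\Gamma$. Then for every $x\in\{0,1\}^d$ and every $\varepsilon$ with $0\le\varepsilon\le\dfrac{\|\boldsymbol g-\boldsymbol\mu\|_\infty\|\boldsymbol e(x)\|_2}{\lambda_{\min}(\Gamma)}$, $$\mathbb{P}\left(|\widehat G_n(x)-G(x)|>\varepsilon\right)\le\exp\left(-\frac n8\left(\frac{\varepsilon\,\lambda_{\min}(\Gamma)}{\|\boldsymbol g-\boldsymbol\mu\|_\infty\|\boldsymbol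 e(x)\|_2}\right)^2+\frac14\right).$$
   Context: $D=\{1,\dots,d\}$; for $A\subseteq D$, $x_A:=(x_i)_{i\in A}$, $\mathbf{P}_A(x_A):=\mathbb{P}(X_A=x_A)$, and $e_A(x_A):=\dfrac{(-1)^{\sum_{j\in A}x_j}}{\mathbf{P}_A(x_A)}$ with $e_\emptyset\equiv1$. The matrix $\Gamma=(\Gamma_{A,B})_{A,B\subseteq D}$ is symmetric positive definite. *)

theory Defs
  imports "HOL-Probability.Probability"
begin

text \<open>Coordinates D are the elements of a finite type 'd (so d = CARD('d)).
  A point x of {0,1}^d is a function 'd => nat with values in {0,1}.\<close>

definition bin01 :: "('d \<Rightarrow> nat) set" where
  "bin01 = {x. \<forall>j. x j \<in> {0, 1}}"

definition margP :: "'a measure \<Rightarrow> ('a \<Rightarrow> 'd \<Rightarrow> nat) \<Rightarrow> 'd set \<Rightarrow> ('d \<Rightarrow> nat) \<Rightarrow> real" where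
  "margP M X A x = measure M {\<omega> \<in> space M. \<forall>j\<in>A. X \<omega> j = x j}"

definition eA :: "'a measure \<Rightarrow> ('a \<Rightarrow> 'd \<Rightarrow> nat) \<Rightarrow> 'd set \<Rightarrow> ('d \<Rightarrow> nat) \<Rightarrow> real" where
  "eA M X A x = (-1) ^ (\<Sum>j\<in>A. x j) / margP M X A x"

definition evec :: "'a measure \<Rightarrow> ('a \<Rightarrow> 'd::finite \<Rightarrow> nat) \<Rightarrow> ('d \<Rightarrow> nat) \<Rightarrow> real ^ ('d set)" where
  "evec M X x = (\<chi> A. eA M X A x)"

definition gvec :: "'a measure \<Rightarrow> ('a \<Rightarrow> 'd::finite \<Rightarrow> nat) \<Rightarrow> (('d \<Rightarrow> nat) \<Rightarrow> real)
    \<Rightarrow> ('d \<Rightarrow> nat) \<Rightarrow> real ^ ('d set)" where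
  "gvec M X G x = (\<chi> A. eA M X A x * G x)"

definition muvec :: "'a measure \<Rightarrow> ('a \<Rightarrow> 'd::finite \<Rightarrow> nat) \<Rightarrow> (('d \<Rightarrow> nat) \<Rightarrow> real)
    \<Rightarrow> real ^ ('d set)" where
  "muvec M X G = integral\<^sup>L M (\<lambda>\<omega>. gvec M X G (X \<omega>))"

definition Gamma :: "'a measure \<Rightarrow> ('a \<Rightarrow> 'd::finite \<Rightarrow> nat) \<Rightarrow> real ^ ('d set) ^ ('d set)" where
  "Gamma M X = (\<chi> A B. integral\<^sup>L M (\<lambda>\<omega>. eA M X A (X \<omega>) * eA M X B (X \<omega>)))"

definition lambda_min :: "real ^ 'n ^ 'n \<Rightarrow> real" where
  "lambda_min S = Min {l. \<exists>v. v \<noteq> 0 \<and> S *v v = l *\<^sub>R v}"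

definition gsupnorm :: "'a measure \<Rightarrow> ('a \<Rightarrow> 'd::finite \<Rightarrow> nat) \<Rightarrow> (('d \<Rightarrow> nat) \<Rightarrow> real) \<Rightarrow> real" where
  "gsupnorm M X G = (SUP y\<in>bin01. norm (gvec M X G y - muvec M X G))"

definition Ghat :: "'a measure \<Rightarrow> ('a \<Rightarrow> 'd::finite \<Rightarrow> nat) \<Rightarrow> (('d \<Rightarrow> nat) \<Rightarrow> real)
    \<Rightarrow> nat \<Rightarrow> (nat \<Rightarrow> 'a \<Rightarrow> 'd \<Rightarrow> nat) \<Rightarrow> ('d \<Rightarrow> nat) \<Rightarrow> 'a \<Rightarrow> real" where
  "Ghat M X G n Xs x \<omega> =
     (matrix_inv (Gamma M X) *v ((1 / real n) *\<^sub>R (\<Sum>i = 1..n. gvec M X G (Xs i \<omega>)))) \<bullet> evec M X x"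

end

theory Submission
  imports Defs
begin

text \<open>
  The functions e_A (A \<subseteq> D) span all functions on {0,1}^d and \<Gamma> is their Gram matrix under
  the law of X, so G = \<beta>^T e with \<Gamma> \<beta> = \<mu>. Hence Ghat_n(x) - G(x) = (\<Gamma>^-1 (muhat_n - \<mu>))^T e(x),
  whose absolute value is at most |muhat_n - \<mu>| |e(x)| / lambda_min(\<Gamma>).

  The vectors Z_i = (g(X_i) - \<mu>) / |g - \<mu>|_\<infinity> are i.i.d., centred and lie in the unit ball. For
  their partial sums S_k, the estimate |S_k + Z|^2 \<le> |S_k|^2 + 1 + 2 S_k \<bullet> Z and Hoeffding's lemma
  for 2 \<alpha> S_k \<bullet> Z, conditionally on S_k, give
  E exp(\<alpha> |S_(k+1)|^2) \<le> e^\<alpha> E exp((\<alpha> + 2 \<alpha>^2) |S_k|^2).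
  Iterating from \<alpha> = 1/(8n) yields E exp(|S_n|^2 / (8n)) \<le> e^(1/6), and Markov's inequality bounds
  the probability of |S_n| > n t by exp(1/6 - n t^2 / 8).
\<close>

section \<open>Hoeffding's lemma for finitely supported weights\<close>

lemma cosh_le_exp_square_half:
  fixes R :: real
  shows "cosh R \<le> exp (R\<^sup>2 / 2)"
proof -
  have nonneg: "cosh R \<le> exp (R\<^sup>2 / 2)" if "R \<ge> 0" for R :: real
  proof -
    have "ln ((1 + exp (2 * R)) / 2) \<le> R + R\<^sup>2 / 2"
      using Hoeffdings_lemma_aux[of "2 * R" "1 / 2"] that
      by (simp add: power2_eq_square field_simps)
    then have "exp (ln ((1 + exp (2 * R)) / 2)) \<le> exp (R + R\<^sup>2 / 2)"
      by (simp only: exp_le_cancel_iff)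
    then have "(1 + exp (2 * R)) / 2 \<le> exp (R + R\<^sup>2 / 2)"
      by (simp add: add_pos_pos)
    then have "(1 + exp (2 * R)) / 2 * exp (- R) \<le> exp (R + R\<^sup>2 / 2) * exp (- R)"
      by simp
    then show ?thesis
      by (simp add: cosh_def field_simps flip: exp_add)
  qed
  show ?thesis
    using nonneg[of R] nonneg[of "- R"] by (cases "R \<ge> 0") auto
qed

lemma exp_le_chord:
  fixes R w :: real
  assumes "0 < R" "\<bar>w\<bar> \<le> R"
  shows "exp w \<le> ((R - w) * exp (- R) + (R + w) * exp R) / (2 * R)"
proof -
  define \<theta> where "\<theta> = (w + R) / (2 * R)"
  have "0 \<le> \<theta>" "\<theta> \<le> 1" "w = (1 - \<theta>) * (- R) + \<theta> * R"
    using assms by (auto simp: \<theta>_def field_simps)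
  then have "exp w \<le> (1 - \<theta>) * exp (- R) + \<theta> * exp R"
    using convex_onD[OF convex_on_exp[of 1], of \<theta> "- R" R] by simp
  also have "\<dots> = ((R - w) * exp (- R) + (R + w) * exp R) / (2 * R)"
    using assms by (simp add: \<theta>_def field_simps)
  finally show ?thesis .
qed

lemma sum_PiE_insert:
  assumes "k \<notin> I" "finite I" "\<And>i. finite (C i)"
  shows "(\<Sum>y\<in>PiE (insert k I) C. F y) = (\<Sum>b\<in>C k. \<Sum>y\<in>PiE I C. F (y(k := b)))"
proof -
  have "(\<Sum>y\<in>PiE (insert k I) C. F y) = (\<Sum>p\<in>C k \<times> PiE I C. F ((\<lambda>(b, y). y(k := b)) p))"
    unfolding PiE_insert_eq
    by (rule sum.reindex[OF inj_combinator[OF assms(1)], unfolded comp_def])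
  also have "\<dots> = (\<Sum>b\<in>C k. \<Sum>y\<in>PiE I C. F (y(k := b)))"
    by (simp add: sum.cartesian_product split_def)
  finally show ?thesis .
qed

locale finite_weights =
  fixes B :: "'b set" and q :: "'b \<Rightarrow> real"
  assumes finite_B: "finite B"
    and weights_nonneg: "\<And>a. a \<in> B \<Longrightarrow> 0 \<le> q a"
    and sum_weights: "sum q B = 1"
begin

lemma weighted_exp_le_exp_square_half:
  assumes mean_zero: "(\<Sum>a\<in>B. q a * W a) = 0"
    and bounded: "\<And>a. a \<in> B \<Longrightarrow> \<bar>W a\<bar> \<le> R"
  shows "(\<Sum>a\<in>B. q a * exp (W a)) \<le> exp (R\<^sup>2 / 2)"
proof (cases "R = 0")
  case True
  then show ?thesis
    using bounded sum_weights by (simp cong: sum.cong)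
next
  case False
  obtain a where "a \<in> B"
    using sum_weights by fastforce
  then have "0 < R"
    using False bounded[of a] abs_ge_zero[of "W a"] by linarith
  have "(\<Sum>a\<in>B. q a * exp (W a))
      \<le> (\<Sum>a\<in>B. q a * (((R - W a) * exp (- R) + (R + W a) * exp R) / (2 * R)))"
    by (intro sum_mono mult_left_mono exp_le_chord \<open>0 < R\<close> bounded weights_nonneg)
  also have "\<dots> = (\<Sum>a\<in>B. q a * cosh R + q a * W a * (sinh R / R))"
    using \<open>0 < R\<close> by (intro sum.cong refl) (simp add: cosh_def sinh_def field_simps)
  also have "\<dots> = cosh R"
    using mean_zero sum_weights by (simp add: sum.distrib flip: sum_distrib_right sum_divide_distrib)
  also have "\<dots> \<le> exp (R\<^sup>2 / 2)"
    by (rule cosh_le_exp_square_half)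
  finally show ?thesis .
qed

lemma weighted_exp_norm_sq_le:
  fixes Z :: "'b \<Rightarrow> 'v::real_inner"
  assumes mean_zero: "(\<Sum>a\<in>B. q a *\<^sub>R Z a) = 0"
    and norm_le_1: "\<And>a. a \<in> B \<Longrightarrow> norm (Z a) \<le> 1"
    and "0 \<le> \<alpha>"
  shows "(\<Sum>a\<in>B. q a * exp (\<alpha> * (norm (s + Z a))\<^sup>2))
    \<le> exp \<alpha> * exp ((\<alpha> + 2 * \<alpha>\<^sup>2) * (norm s)\<^sup>2)"
proof -
  define W where "W a = 2 * \<alpha> * (s \<bullet> Z a)" for a
  have "\<alpha> * (norm (s + Z a))\<^sup>2 \<le> (\<alpha> + \<alpha> * (norm s)\<^sup>2) + W a" if "a \<in> B" for a
  proof -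
    have "(norm (s + Z a))\<^sup>2 = (norm s)\<^sup>2 + 2 * (s \<bullet> Z a) + (norm (Z a))\<^sup>2"
      by (simp add: power2_norm_eq_inner inner_add inner_commute)
    moreover have "(norm (Z a))\<^sup>2 \<le> 1"
      using norm_le_1[OF that] by (simp add: power_le_one)
    ultimately show ?thesis
      using \<open>0 \<le> \<alpha>\<close> by (simp add: W_def algebra_simps) (metis mult_left_le)
  qed
  then have "(\<Sum>a\<in>B. q a * exp (\<alpha> * (norm (s + Z a))\<^sup>2))
      \<le> (\<Sum>a\<in>B. q a * (exp (\<alpha> + \<alpha> * (norm s)\<^sup>2) * exp (W a)))"
    by (intro sum_mono mult_left_mono weights_nonneg) (simp_all flip: exp_add)
  also have "\<dots> = exp (\<alpha> + \<alpha> * (norm s)\<^sup>2) * (\<Sum>a\<in>B. q a * exp (W a))"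
    by (simp add: sum_distrib_left mult.left_commute)
  also have "\<dots> \<le> exp (\<alpha> + \<alpha> * (norm s)\<^sup>2) * exp ((2 * \<alpha> * norm s)\<^sup>2 / 2)"
  proof (intro mult_left_mono weighted_exp_le_exp_square_half)
    have "(\<Sum>a\<in>B. q a * W a) = 2 * \<alpha> * (s \<bullet> (\<Sum>a\<in>B. q a *\<^sub>R Z a))"
      by (simp add: W_def inner_sum_right sum_distrib_left algebra_simps)
    then show "(\<Sum>a\<in>B. q a * W a) = 0"
      using mean_zero by simp
    show "\<bar>W a\<bar> \<le> 2 * \<alpha> * norm s" if "a \<in> B" for a
    proof -
      have "\<bar>s \<bullet> Z a\<bar> \<le> norm s"
        using Cauchy_Schwarz_ineq2[of s "Z a"] norm_le_1[OF that]
        by (meson mult_left_le norm_ge_zero order_trans)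
      then show ?thesis
        using \<open>0 \<le> \<alpha>\<close> by (simp add: W_def abs_mult mult_left_mono)
    qed
  qed simp
  also have "\<dots> = exp \<alpha> * exp ((\<alpha> + 2 * \<alpha>\<^sup>2) * (norm s)\<^sup>2)"
    by (simp add: power2_eq_square algebra_simps flip: exp_add)
  finally show ?thesis .
qed

end

section \<open>Exponential moments of sums of centred vectors in the unit ball\<close>

definition (in finite_weights) sample_weight :: "nat \<Rightarrow> (nat \<Rightarrow> 'b) \<Rightarrow> real" where
  "sample_weight k y = (\<Prod>i\<in>{1..k}. q (y i))"

lemma (in finite_weights) sample_weight_nonneg: "y \<in> {1..k} \<rightarrow>\<^sub>E B \<Longrightarrow> 0 \<le> sample_weight k y"
  unfolding sample_weight_def by (intro prod_nonneg) (auto intro: weights_nonneg)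

text \<open>
  norm_sq_mgf k \<alpha> is E exp(\<alpha> |Z(Y_1) + ... + Z(Y_k)|^2) for i.i.d. Y_i with law q on B,
  written as a finite sum over the extensional maps {1..k} \<rightarrow> B.
\<close>

locale centred_in_unit_ball = finite_weights B q for B :: "'b set" and q +
  fixes Z :: "'b \<Rightarrow> 'v::real_inner"
  assumes mean_zero: "(\<Sum>a\<in>B. q a *\<^sub>R Z a) = 0"
    and norm_le_1: "\<And>a. a \<in> B \<Longrightarrow> norm (Z a) \<le> 1"
begin

definition norm_sq_mgf :: "nat \<Rightarrow> real \<Rightarrow> real" where
  "norm_sq_mgf k \<alpha> =
    (\<Sum>y\<in>{1..k} \<rightarrow>\<^sub>E B. sample_weight k y * exp (\<alpha> * (norm (\<Sum>i\<in>{1..k}. Z (y i)))\<^sup>2))"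

lemma norm_sq_mgf_nonneg: "0 \<le> norm_sq_mgf k \<alpha>"
  unfolding norm_sq_mgf_def by (intro sum_nonneg mult_nonneg_nonneg sample_weight_nonneg) auto

lemma norm_sq_mgf_mono: "\<alpha> \<le> \<beta> \<Longrightarrow> norm_sq_mgf k \<alpha> \<le> norm_sq_mgf k \<beta>"
  unfolding norm_sq_mgf_def
  by (intro sum_mono mult_left_mono sample_weight_nonneg) (auto intro: mult_right_mono)

lemma norm_sq_mgf_Suc_le:
  assumes "0 \<le> \<alpha>"
  shows "norm_sq_mgf (Suc k) \<alpha> \<le> exp \<alpha> * norm_sq_mgf k (\<alpha> + 2 * \<alpha>\<^sup>2)"
proof -
  let ?S = "\<lambda>k y. \<Sum>i\<in>{1..k}. Z (y i)"
  have upd: "sample_weight (Suc k) (y(Suc k := b)) = q b * sample_weight k y"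
    "?S (Suc k) (y(Suc k := b)) = ?S k y + Z b" for y b
    unfolding sample_weight_def by (auto intro!: prod.cong sum.cong)
  have "{1..Suc k} = insert (Suc k) {1..k}"
    by auto
  then have split: "(\<Sum>y\<in>{1..Suc k} \<rightarrow>\<^sub>E B. F y) = (\<Sum>b\<in>B. \<Sum>y\<in>{1..k} \<rightarrow>\<^sub>E B. F (y(Suc k := b)))"
    for F :: "(nat \<Rightarrow> 'b) \<Rightarrow> real"
    using sum_PiE_insert[of "Suc k" "{1..k}" "\<lambda>_. B" F] finite_B by simp
  have "norm_sq_mgf (Suc k) \<alpha>
      = (\<Sum>b\<in>B. \<Sum>y\<in>{1..k} \<rightarrow>\<^sub>E B. sample_weight k y * (q b * exp (\<alpha> * (norm (?S k y + Z b))\<^sup>2)))"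
    unfolding norm_sq_mgf_def split upd by (simp add: mult_ac)
  also have "\<dots> = (\<Sum>y\<in>{1..k} \<rightarrow>\<^sub>E B.
      sample_weight k y * (\<Sum>b\<in>B. q b * exp (\<alpha> * (norm (?S k y + Z b))\<^sup>2)))"
    by (subst sum.swap) (simp add: sum_distrib_left)
  also have "\<dots> \<le> (\<Sum>y\<in>{1..k} \<rightarrow>\<^sub>E B.
      sample_weight k y * (exp \<alpha> * exp ((\<alpha> + 2 * \<alpha>\<^sup>2) * (norm (?S k y))\<^sup>2)))"
    by (intro sum_mono mult_left_mono sample_weight_nonneg
        weighted_exp_norm_sq_le mean_zero norm_le_1 assms)
  also have "\<dots> = exp \<alpha> * norm_sq_mgf k (\<alpha> + 2 * \<alpha>\<^sup>2)"
    unfolding norm_sq_mgf_def by (simp add: sum_distrib_left mult.left_commute)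
  finally show ?thesis .
qed

lemma norm_sq_mgf_le:
  assumes "0 < a"
  shows "norm_sq_mgf k (1 / (a + 2 * k)) \<le> exp (k / a)"
proof (induction k)
  case 0
  then show ?case
    by (simp add: norm_sq_mgf_def sample_weight_def)
next
  case (Suc k)
  define \<alpha> where "\<alpha> = 1 / (a + 2 * Suc k)"
  have "0 \<le> \<alpha>" "\<alpha> \<le> 1 / a"
    using assms by (auto simp: \<alpha>_def intro!: divide_left_mono)
  have "\<alpha> + 2 * \<alpha>\<^sup>2 \<le> 1 / (a + 2 * k)"
  proof -
    define E where "E = a + 2 * Suc k"
    have "2 < E"
      using assms by (simp add: E_def)
    then have "1 / E + 2 * (1 / E)\<^sup>2 \<le> 1 / (E - 2)"
      by (simp add: power2_eq_square field_simps)
    then show ?thesis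
      by (simp add: \<alpha>_def E_def)
  qed
  have "norm_sq_mgf (Suc k) \<alpha> \<le> exp \<alpha> * norm_sq_mgf k (\<alpha> + 2 * \<alpha>\<^sup>2)"
    by (rule norm_sq_mgf_Suc_le[OF \<open>0 \<le> \<alpha>\<close>])
  also have "\<dots> \<le> exp (1 / a) * exp (k / a)"
    using order_trans[OF norm_sq_mgf_mono Suc.IH] \<open>\<alpha> + 2 * \<alpha>\<^sup>2 \<le> 1 / (a + 2 * k)\<close> \<open>\<alpha> \<le> 1 / a\<close>
    by (intro mult_mono) (auto simp: norm_sq_mgf_nonneg)
  also have "\<dots> = exp (Suc k / a)"
    by (simp add: add_divide_distrib flip: exp_add)
  finally show ?case
    by (simp add: \<alpha>_def)
qed

lemma sample_tail_le:
  assumes "1 \<le> n" "0 \<le> t"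
  shows "(\<Sum>y\<in>{y\<in>{1..n} \<rightarrow>\<^sub>E B. n * t < norm (\<Sum>i\<in>{1..n}. Z (y i))}. sample_weight n y)
    \<le> exp (1 / 6 - n * t\<^sup>2 / 8)"
proof -
  \<comment> \<open>Chernoff bound with \<open>\<alpha> = 1/(6n + 2n)\<close>, the value reached by \<open>norm_sq_mgf_le\<close> with \<open>a = 6n\<close>.\<close>
  define \<alpha> where "\<alpha> = 1 / (8 * real n)"
  define F where "F y = sample_weight n y * exp (\<alpha> * ((norm (\<Sum>i\<in>{1..n}. Z (y i)))\<^sup>2 - (n * t)\<^sup>2))"
    for y
  have "sample_weight n y \<le> F y"
    if "y \<in> {y\<in>{1..n} \<rightarrow>\<^sub>E B. n * t < norm (\<Sum>i\<in>{1..n}. Z (y i))}" for y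
  proof -
    have "(n * t)\<^sup>2 \<le> (norm (\<Sum>i\<in>{1..n}. Z (y i)))\<^sup>2"
      using that assms by (intro power_mono) auto
    then have "1 \<le> exp (\<alpha> * ((norm (\<Sum>i\<in>{1..n}. Z (y i)))\<^sup>2 - (n * t)\<^sup>2))"
      by (simp add: \<alpha>_def)
    with that show ?thesis
      using mult_left_mono[of 1 _ "sample_weight n y"] sample_weight_nonneg[of y n] by (simp add: F_def)
  qed
  then have "(\<Sum>y\<in>{y\<in>{1..n} \<rightarrow>\<^sub>E B. n * t < norm (\<Sum>i\<in>{1..n}. Z (y i))}. sample_weight n y)
      \<le> (\<Sum>y\<in>{y\<in>{1..n} \<rightarrow>\<^sub>E B. n * t < norm (\<Sum>i\<in>{1..n}. Z (y i))}. F y)"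
    by (rule sum_mono)
  also have "\<dots> \<le> (\<Sum>y\<in>{1..n} \<rightarrow>\<^sub>E B. F y)"
    by (intro sum_mono2 finite_PiE finite_B) (auto simp: F_def sample_weight_nonneg)
  also have "\<dots> = exp (- \<alpha> * (n * t)\<^sup>2) * norm_sq_mgf n \<alpha>"
    unfolding norm_sq_mgf_def F_def sum_distrib_left
    by (intro sum.cong refl) (simp add: algebra_simps flip: exp_add)
  also have "\<dots> \<le> exp (- \<alpha> * (n * t)\<^sup>2) * exp (n / (6 * n))"
    using norm_sq_mgf_le[of "6 * n" n] assms by (simp add: \<alpha>_def)
  also have "\<dots> = exp (1 / 6 - n * t\<^sup>2 / 8)"
    using assms by (simp add: \<alpha>_def power2_eq_square field_simps flip: exp_add)
  finally show ?thesis .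
qed

end

section \<open>The smallest eigenvalue of a symmetric matrix\<close>

lemma symmetric_matrix_inner:
  fixes S :: "real^'n^'n"
  assumes "transpose S = S"
  shows "(S *v u) \<bullet> w = u \<bullet> (S *v w)"
  by (metis assms dot_lmul_matrix vector_transpose_matrix)

lemma linear_coeff_eq_0_if_quadratic_nonneg:
  fixes a b :: real
  assumes nonneg: "\<And>s. 0 \<le> 2 * s * a + s\<^sup>2 * b" and "0 \<le> b"
  shows "a = 0"
proof -
  define s where "s = - a / (b + 1)"
  have s: "s * (b + 1) = - a"
    using \<open>0 \<le> b\<close> by (simp add: s_def)
  have "0 \<le> (2 * s * a + s\<^sup>2 * b) * (b + 1)\<^sup>2"
    using nonneg[of s] by simp
  also have "\<dots> = 2 * a * (s * (b + 1)) * (b + 1) + (s * (b + 1))\<^sup>2 * b"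
    by (simp add: power2_eq_square algebra_simps)
  also have "\<dots> = - a\<^sup>2 * (b + 2)"
    unfolding s by (simp add: power2_eq_square algebra_simps)
  finally show ?thesis
    using \<open>0 \<le> b\<close> by (simp add: mult_le_0_iff)
qed

lemma finite_eigenvalues_symmetric:
  fixes S :: "real^'n^'n"
  assumes sym: "transpose S = S"
  shows "finite {l. \<exists>v. v \<noteq> 0 \<and> S *v v = l *\<^sub>R v}"
proof -
  define L where "L = {l. \<exists>v. v \<noteq> 0 \<and> S *v v = l *\<^sub>R v}"
  define ev where "ev l = (SOME v. v \<noteq> 0 \<and> S *v v = l *\<^sub>R v)" for l
  have ev: "ev l \<noteq> 0" "S *v ev l = l *\<^sub>R ev l" if "l \<in> L" for l
    using someI_ex[of "\<lambda>v. v \<noteq> 0 \<and> S *v v = l *\<^sub>R v"] that by (auto simp: L_def ev_def)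
  have inj: "inj_on ev L"
  proof (rule inj_onI)
    fix l l' assume "l \<in> L" "l' \<in> L" "ev l = ev l'"
    then have "(l - l') *\<^sub>R ev l = 0"
      using ev by (metis scaleR_left_diff_distrib right_minus_eq)
    then show "l = l'"
      using ev(1)[OF \<open>l \<in> L\<close>] by simp
  qed
  have "pairwise orthogonal (ev ` L)"
    unfolding pairwise_image
  proof (intro pairwiseI impI)
    fix l l' assume "l \<in> L" "l' \<in> L" "ev l \<noteq> ev l'"
    have "l * (ev l \<bullet> ev l') = (S *v ev l) \<bullet> ev l'"
      using ev(2)[OF \<open>l \<in> L\<close>] by simp
    also have "\<dots> = ev l \<bullet> (S *v ev l')"
      by (rule symmetric_matrix_inner[OF sym])
    also have "\<dots> = l' * (ev l \<bullet> ev l')"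
      using ev(2)[OF \<open>l' \<in> L\<close>] by simp
    finally show "orthogonal (ev l) (ev l')"
      using \<open>ev l \<noteq> ev l'\<close> by (auto simp: orthogonal_def)
  qed
  moreover have "0 \<notin> ev ` L"
    using ev by auto
  ultimately have "finite (ev ` L)"
    using pairwise_orthogonal_independent independent_imp_finite by blast
  then show ?thesis
    using inj finite_imageD unfolding L_def by blast
qed

lemma rayleigh_quotient_attains_min:
  fixes S :: "real^'n^'n"
  obtains u where "norm u = 1" "\<And>v. (u \<bullet> (S *v u)) * (norm v)\<^sup>2 \<le> v \<bullet> (S *v v)"
proof -
  define Q where "Q v = v \<bullet> (S *v v)" for v :: "real^'n"
  have "continuous_on (sphere 0 1) Q"
    unfolding Q_def by (intro continuous_intros linear_continuous_on matrix_vector_mul_bounded_linear)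
  moreover have "sphere (0::real^'n) 1 \<noteq> {}"
    using vector_choose_size[of 1] by auto
  ultimately obtain u where u: "u \<in> sphere 0 1" and min: "\<And>v. v \<in> sphere 0 1 \<Longrightarrow> Q u \<le> Q v"
    using continuous_attains_inf[OF compact_sphere] by blast
  have "Q u * (norm v)\<^sup>2 \<le> Q v" for v
  proof (cases "v = 0")
    case False
    have "Q u \<le> Q ((1 / norm v) *\<^sub>R v)"
      using False by (intro min) simp
    also have "\<dots> = Q v / (norm v)\<^sup>2"
      by (simp add: Q_def matrix_vector_mult_scaleR power2_eq_square)
    finally show ?thesis
      using False by (simp add: field_simps)
  qed (simp add: Q_def)
  with u show ?thesis
    using that unfolding Q_def by simp
qed

lemma rayleigh_minimizer_eigenvector:
  fixes S :: "real^'n^'n"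
  assumes sym: "transpose S = S" and "norm u = 1"
    and min: "\<And>v. (u \<bullet> (S *v u)) * (norm v)\<^sup>2 \<le> v \<bullet> (S *v v)"
  shows "S *v u = (u \<bullet> (S *v u)) *\<^sub>R u"
proof -
  \<comment> \<open>First-order condition: perturb the minimiser along the residual \<open>r\<close>.\<close>
  define m where "m = u \<bullet> (S *v u)"
  define r where "r = S *v u - m *\<^sub>R u"
  have "u \<bullet> u = 1"
    using \<open>norm u = 1\<close> by (simp add: dot_square_norm)
  then have "r \<bullet> (S *v u) = r \<bullet> r + m * (u \<bullet> r)"
    by (simp add: r_def inner_commute algebra_simps)
  have "0 \<le> 2 * s * (r \<bullet> r) + s\<^sup>2 * (r \<bullet> (S *v r) - m * (norm r)\<^sup>2)" for s
  proof -
    have "m * (norm (u + s *\<^sub>R r))\<^sup>2 \<le> (u + s *\<^sub>R r) \<bullet> (S *v (u + s *\<^sub>R r))"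
      using min unfolding m_def .
    moreover have "(norm (u + s *\<^sub>R r))\<^sup>2 = 1 + 2 * s * (u \<bullet> r) + s\<^sup>2 * (norm r)\<^sup>2"
      using \<open>u \<bullet> u = 1\<close> unfolding power2_norm_eq_inner
      by (simp add: inner_commute power2_eq_square algebra_simps)
    moreover have "(u + s *\<^sub>R r) \<bullet> (S *v (u + s *\<^sub>R r))
        = m + 2 * s * (r \<bullet> (S *v u)) + s\<^sup>2 * (r \<bullet> (S *v r))"
      using symmetric_matrix_inner[OF sym, of r u]
      by (simp add: m_def inner_commute power2_eq_square algebra_simps)
    ultimately show ?thesis
      using \<open>r \<bullet> (S *v u) = r \<bullet> r + m * (u \<bullet> r)\<close> by (simp add: algebra_simps power2_eq_square)
  qed
  then have "r \<bullet> r = 0"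
    by (rule linear_coeff_eq_0_if_quadratic_nonneg) (use min[of r] in \<open>simp add: m_def\<close>)
  then show ?thesis
    by (simp add: r_def m_def)
qed

lemma lambda_min_rayleigh:
  fixes S :: "real^'n^'n"
  assumes sym: "transpose S = S"
  obtains u where "norm u = 1" "lambda_min S = u \<bullet> (S *v u)"
    "\<And>v. lambda_min S * (norm v)\<^sup>2 \<le> v \<bullet> (S *v v)"
proof -
  obtain u where u: "norm u = 1" and min: "\<And>v. (u \<bullet> (S *v u)) * (norm v)\<^sup>2 \<le> v \<bullet> (S *v v)"
    using rayleigh_quotient_attains_min by blast
  \<comment> \<open>\<open>lambda_min\<close> is a \<open>Min\<close>, so the set of eigenvalues must be shown finite.\<close>
  have "lambda_min S = u \<bullet> (S *v u)"
    unfolding lambda_min_def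
  proof (intro Min_eqI finite_eigenvalues_symmetric[OF sym])
    fix l assume "l \<in> {l. \<exists>v. v \<noteq> 0 \<and> S *v v = l *\<^sub>R v}"
    then obtain v where "v \<noteq> 0" "S *v v = l *\<^sub>R v"
      by blast
    then have "(u \<bullet> (S *v u)) * (norm v)\<^sup>2 \<le> l * (norm v)\<^sup>2"
      using min[of v] by (simp add: dot_square_norm)
    then show "u \<bullet> (S *v u) \<le> l"
      using \<open>v \<noteq> 0\<close> by simp
  next
    show "u \<bullet> (S *v u) \<in> {l. \<exists>v. v \<noteq> 0 \<and> S *v v = l *\<^sub>R v}"
      using rayleigh_minimizer_eigenvector[OF sym u min] u by (intro CollectI exI[of _ u]) auto
  qed
  with u min show ?thesis
    using that by simp
qed

lemma lambda_min_pos: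
  fixes S :: "real^'n^'n"
  assumes "transpose S = S" and "\<And>v. v \<noteq> 0 \<Longrightarrow> 0 < v \<bullet> (S *v v)"
  shows "0 < lambda_min S"
  by (metis assms lambda_min_rayleigh norm_zero zero_neq_one)

lemma lambda_min_le_quadratic_form:
  fixes S :: "real^'n^'n"
  assumes "transpose S = S"
  shows "lambda_min S * (norm v)\<^sup>2 \<le> v \<bullet> (S *v v)"
  using lambda_min_rayleigh[OF assms] by metis

lemma invertible_if_pos_def:
  fixes S :: "real^'n^'n"
  assumes "\<And>v. v \<noteq> 0 \<Longrightarrow> 0 < v \<bullet> (S *v v)"
  shows "invertible S"
  using assms unfolding invertible_left_inverse matrix_left_invertible_ker
  by (metis inner_zero_right less_irrefl)

lemma matrix_inv_cancel:
  fixes A :: "'a::field^'n^'n"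
  assumes "invertible A"
  shows "A *v (matrix_inv A *v w) = w" "matrix_inv A *v (A *v w) = w"
proof -
  have "A ** matrix_inv A = mat 1 \<and> matrix_inv A ** A = mat 1"
    using assms unfolding invertible_def matrix_inv_def by (rule someI_ex)
  then show "A *v (matrix_inv A *v w) = w" "matrix_inv A *v (A *v w) = w"
    by (simp_all add: matrix_vector_mul_assoc)
qed

lemma norm_matrix_inv_mult_le:
  fixes S :: "real^'n^'n"
  assumes sym: "transpose S = S" and pd: "\<And>v. v \<noteq> 0 \<Longrightarrow> 0 < v \<bullet> (S *v v)"
  shows "norm (matrix_inv S *v w) \<le> norm w / lambda_min S"
proof -
  define v where "v = matrix_inv S *v w"
  have "lambda_min S * (norm v)\<^sup>2 \<le> v \<bullet> w"
    using lambda_min_le_quadratic_form[OF sym, of v]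
    by (simp add: v_def matrix_inv_cancel invertible_if_pos_def[OF pd])
  also have "\<dots> \<le> norm v * norm w"
    by (rule norm_cauchy_schwarz)
  finally have "lambda_min S * norm v \<le> norm w"
    by (cases "v = 0") (auto simp: power2_eq_square mult.assoc)
  then show ?thesis
    using lambda_min_pos[OF sym pd] by (simp add: v_def field_simps)
qed

section \<open>I.i.d. samples of a finitely-valued random variable\<close>

lemma (in finite_measure) integral_finite_valued:
  fixes f :: "'b \<Rightarrow> 'c::{banach,second_countable_topology}"
  assumes X: "X \<in> measurable M (count_space B)" and "finite B"
  shows "(\<integral>\<omega>. f (X \<omega>) \<partial>M) = (\<Sum>a\<in>B. measure M {\<omega> \<in> space M. X \<omega> = a} *\<^sub>R f a)"
proof -
  have events: "{\<omega> \<in> space M. X \<omega> = a} \<in> sets M" if "a \<in> B" for a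
    using measurable_sets[OF X, of "{a}"] that by (simp add: vimage_def Int_def conj_commute)
  have integrable: "integrable M (indicator {\<omega> \<in> space M. X \<omega> = a} :: _ \<Rightarrow> real)" if "a \<in> B" for a
    using events[OF that] by (auto simp flip: less_top)
  have "f (X \<omega>) = (\<Sum>a\<in>B. indicator {\<omega> \<in> space M. X \<omega> = a} \<omega> *\<^sub>R f a)" if "\<omega> \<in> space M" for \<omega>
  proof -
    have "(\<Sum>a\<in>B. indicator {\<omega> \<in> space M. X \<omega> = a} \<omega> *\<^sub>R f a) = (\<Sum>a\<in>B. if X \<omega> = a then f a else 0)"
      using that by (intro sum.cong) (auto simp: indicator_def)
    then show ?thesis
      using measurable_space[OF X that] \<open>finite B\<close> by simp
  qed
  then have "(\<integral>\<omega>. f (X \<omega>) \<partial>M)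
      = (\<integral>\<omega>. (\<Sum>a\<in>B. indicator {\<omega> \<in> space M. X \<omega> = a} \<omega> *\<^sub>R f a) \<partial>M)"
    by (rule Bochner_Integration.integral_cong[OF refl])
  also have "\<dots> = (\<Sum>a\<in>B. (\<integral>\<omega>. indicator {\<omega> \<in> space M. X \<omega> = a} \<omega> *\<^sub>R f a \<partial>M))"
    using integrable
    by (intro Bochner_Integration.integral_sum Bochner_Integration.integrable_scaleR_left) auto
  also have "\<dots> = (\<Sum>a\<in>B. measure M {\<omega> \<in> space M. X \<omega> = a} *\<^sub>R f a)"
    using events integrable
    by (intro sum.cong refl, subst Bochner_Integration.integral_scaleR_left) (auto simp: Int_absorb2)
  finally show ?thesis .
qed

lemma (in prob_space) indep_vars_measurable:
  "indep_vars M' X I \<Longrightarrow> i \<in> I \<Longrightarrow> X i \<in> measurable M (M' i)"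
  unfolding indep_vars_def2 by blast

lemma (in prob_space) measure_iid_sample_event:
  assumes X: "X \<in> measurable M (count_space B)"
    and indep: "indep_vars (\<lambda>_. count_space B) Xs I"
    and ident: "\<And>i. i \<in> I \<Longrightarrow> distr M (count_space B) (Xs i) = distr M (count_space B) X"
    and I: "finite I" "I \<noteq> {}" and E: "E \<subseteq> I \<rightarrow>\<^sub>E B" "finite E"
  shows "{\<omega> \<in> space M. (\<lambda>i\<in>I. Xs i \<omega>) \<in> E} \<in> events"
    and "prob {\<omega> \<in> space M. (\<lambda>i\<in>I. Xs i \<omega>) \<in> E}
      = (\<Sum>y\<in>E. \<Prod>i\<in>I. prob {\<omega> \<in> space M. X \<omega> = y i})"
proof -
  note Xs = indep_vars_measurable[OF indep]
  define A where "A y = {\<omega> \<in> space M. (\<lambda>i\<in>I. Xs i \<omega>) = y}" for y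
  have A_eq: "A y = (\<Inter>i\<in>I. Xs i -` {y i} \<inter> space M)" if "y \<in> E" for y
    using that E \<open>I \<noteq> {}\<close> by (auto simp: A_def PiE_def extensional_def fun_eq_iff)
  have A_events: "A y \<in> events" if "y \<in> E" for y
    unfolding A_eq[OF that] using that E I
    by (intro sets.finite_INT measurable_sets[OF Xs]) (auto simp: PiE_iff)
  have union: "{\<omega> \<in> space M. (\<lambda>i\<in>I. Xs i \<omega>) \<in> E} = (\<Union>y\<in>E. A y)"
    by (auto simp: A_def)
  then show "{\<omega> \<in> space M. (\<lambda>i\<in>I. Xs i \<omega>) \<in> E} \<in> events"
    using A_events \<open>finite E\<close> by auto
  have "prob (A y) = (\<Prod>i\<in>I. prob {\<omega> \<in> space M. X \<omega> = y i})" if "y \<in> E" for y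
  proof -
    have y: "y i \<in> B" if "i \<in> I" for i
      using \<open>y \<in> E\<close> E that by (auto simp: PiE_iff)
    have "prob (Xs i -` {y i} \<inter> space M) = prob {\<omega> \<in> space M. X \<omega> = y i}" if "i \<in> I" for i
      using measure_distr[OF Xs[OF that], of "{y i}"] measure_distr[OF X, of "{y i}"]
        ident[OF that] y[OF that]
      by (simp add: vimage_def Int_def conj_commute)
    then show ?thesis
      unfolding A_eq[OF that] using I y by (subst indep_varsD_finite[OF indep]) auto
  qed
  moreover have "disjoint_family_on A E"
    by (auto simp: disjoint_family_on_def A_def)
  ultimately show "prob {\<omega> \<in> space M. (\<lambda>i\<in>I. Xs i \<omega>) \<in> E}
      = (\<Sum>y\<in>E. \<Prod>i\<in>I. prob {\<omega> \<in> space M. X \<omega> = y i})"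
    unfolding union using A_events \<open>finite E\<close> by (simp add: finite_measure_finite_Union image_subset_iff)
qed

lemma (in prob_space) centred_in_unit_ball_normalised:
  fixes f :: "'b \<Rightarrow> 'v::euclidean_space"
  assumes "finite B" and X: "X \<in> measurable M (count_space B)" and "0 < c"
    and bounded: "\<And>a. a \<in> B \<Longrightarrow> norm (f a - expectation (\<lambda>\<omega>. f (X \<omega>))) \<le> c"
  shows "centred_in_unit_ball B (\<lambda>a. prob {\<omega> \<in> space M. X \<omega> = a})
    (\<lambda>a. (1 / c) *\<^sub>R (f a - expectation (\<lambda>\<omega>. f (X \<omega>))))"
proof -
  define q where "q a = prob {\<omega> \<in> space M. X \<omega> = a}" for a
  define \<mu> where "\<mu> = expectation (\<lambda>\<omega>. f (X \<omega>))"
  have "sum q B = 1"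
    using integral_finite_valued[OF X \<open>finite B\<close>, of "\<lambda>_. 1 :: real"] by (simp add: q_def prob_space)
  moreover have "\<mu> = (\<Sum>a\<in>B. q a *\<^sub>R f a)"
    unfolding \<mu>_def q_def by (rule integral_finite_valued[OF X \<open>finite B\<close>])
  moreover have "(\<Sum>a\<in>B. q a *\<^sub>R ((1 / c) *\<^sub>R (f a - \<mu>)))
      = (1 / c) *\<^sub>R ((\<Sum>a\<in>B. q a *\<^sub>R f a) - (\<Sum>a\<in>B. q a) *\<^sub>R \<mu>)"
    by (simp add: scaleR_diff_right sum_subtractf scaleR_sum_right scaleR_sum_left)
  moreover have "norm ((1 / c) *\<^sub>R (f a - \<mu>)) \<le> 1" if "a \<in> B" for a
    using bounded[OF that] \<open>0 < c\<close> by (simp add: \<mu>_def divide_le_eq_1)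
  ultimately show ?thesis
    using \<open>finite B\<close> unfolding q_def \<mu>_def by unfold_locales auto
qed

lemma (in prob_space) prob_sample_mean_deviation:
  fixes f :: "'b \<Rightarrow> 'v::euclidean_space" and Xs :: "nat \<Rightarrow> 'a \<Rightarrow> 'b" and n :: nat
  assumes "finite B" and X: "X \<in> measurable M (count_space B)"
    and indep: "indep_vars (\<lambda>_. count_space B) Xs {1..n}"
    and ident: "\<And>i. i \<in> {1..n} \<Longrightarrow> distr M (count_space B) (Xs i) = distr M (count_space B) X"
    and "1 \<le> n" and "0 < c" and "0 \<le> t"
    and bounded: "\<And>a. a \<in> B \<Longrightarrow> norm (f a - expectation (\<lambda>\<omega>. f (X \<omega>))) \<le> c"
  defines "D \<equiv> {\<omega> \<in> space M.
    t < norm ((1 / n) *\<^sub>R (\<Sum>i = 1..n. f (Xs i \<omega>)) - expectation (\<lambda>\<omega>. f (X \<omega>)))}"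
  shows "D \<in> events" and "prob D \<le> exp (1 / 6 - n * (t / c)\<^sup>2 / 8)"
proof -
  define q where "q a = prob {\<omega> \<in> space M. X \<omega> = a}" for a
  define \<mu> where "\<mu> = expectation (\<lambda>\<omega>. f (X \<omega>))"
  define Z where "Z a = (1 / c) *\<^sub>R (f a - \<mu>)" for a
  interpret centred_in_unit_ball B q Z
    unfolding q_def Z_def \<mu>_def using \<open>finite B\<close> X \<open>0 < c\<close> bounded
    by (rule centred_in_unit_ball_normalised)
  define T where "T = {y \<in> {1..n} \<rightarrow>\<^sub>E B. n * (t / c) < norm (\<Sum>i = 1..n. Z (y i))}"
  have D: "D = {\<omega> \<in> space M. (\<lambda>i\<in>{1..n}. Xs i \<omega>) \<in> T}"
    unfolding D_def \<mu>_def[symmetric]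
  proof (intro Collect_cong conj_cong refl)
    fix \<omega> assume "\<omega> \<in> space M"
    then have "Xs i \<omega> \<in> B" if "i \<in> {1..n}" for i
      using measurable_space[OF indep_vars_measurable[OF indep that]] by simp
    then have "(\<lambda>i\<in>{1..n}. Xs i \<omega>) \<in> {1..n} \<rightarrow>\<^sub>E B"
      by auto
    moreover have "(1 / n) *\<^sub>R (\<Sum>i = 1..n. f (Xs i \<omega>)) - \<mu> = (c / n) *\<^sub>R (\<Sum>i = 1..n. Z (Xs i \<omega>))"
      using \<open>0 < c\<close> \<open>1 \<le> n\<close>
      by (simp add: Z_def sum_subtractf scaleR_diff_right sum_constant_scaleR flip: scaleR_sum_right)
    moreover have "(\<Sum>i = 1..n. Z ((\<lambda>i\<in>{1..n}. Xs i \<omega>) i)) = (\<Sum>i = 1..n. Z (Xs i \<omega>))"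
      by (intro sum.cong) auto
    moreover have "t < c / n * r \<longleftrightarrow> n * (t / c) < r" for r
      using \<open>0 < c\<close> \<open>1 \<le> n\<close> by (simp add: field_simps)
    ultimately show "t < norm ((1 / n) *\<^sub>R (\<Sum>i = 1..n. f (Xs i \<omega>)) - \<mu>)
        \<longleftrightarrow> (\<lambda>i\<in>{1..n}. Xs i \<omega>) \<in> T"
      using \<open>0 < c\<close> by (simp add: T_def)
  qed
  have "T \<subseteq> {1..n} \<rightarrow>\<^sub>E B"
    by (auto simp: T_def)
  moreover have "finite ({1..n} \<rightarrow>\<^sub>E B)"
    using \<open>finite B\<close> by (simp add: finite_PiE)
  ultimately have "T \<subseteq> {1..n} \<rightarrow>\<^sub>E B" "finite T"
    using finite_subset by blast+
  note sample = measure_iid_sample_event[OF X indep ident _ _ this]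
  show "D \<in> events"
    unfolding D using \<open>1 \<le> n\<close> by (intro sample) auto
  have "prob D = (\<Sum>y\<in>T. sample_weight n y)"
    unfolding D sample_weight_def q_def using \<open>1 \<le> n\<close> by (subst sample) auto
  also have "\<dots> \<le> exp (1 / 6 - n * (t / c)\<^sup>2 / 8)"
    unfolding T_def using \<open>1 \<le> n\<close> \<open>0 < c\<close> \<open>0 \<le> t\<close> by (intro sample_tail_le) auto
  finally show "prob D \<le> exp (1 / 6 - n * (t / c)\<^sup>2 / 8)" .
qed

section \<open>The estimator\<close>

lemma bin01_eq_PiE: "bin01 = UNIV \<rightarrow>\<^sub>E {0, 1 :: nat}"
  by (rule set_eqI) (simp add: bin01_def PiE_iff)

lemma finite_bin01: "finite (bin01 :: ('d::finite \<Rightarrow> nat) set)"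
  unfolding bin01_eq_PiE by (rule finite_PiE) auto

lemma indicator_ones_eq:
  assumes "a \<in> bin01"
  shows "indicator {j. a j = 1} = a"
proof
  fix j
  have "a j = 0 \<or> a j = 1"
    using assms by (simp add: bin01_def)
  then show "indicator {j. a j = 1} j = a j"
    by (auto simp: indicator_def)
qed

lemma gvec_minus_muvec_le_gsupnorm:
  fixes X :: "'a \<Rightarrow> 'd::finite \<Rightarrow> nat"
  assumes "a \<in> bin01"
  shows "norm (gvec M X G a - muvec M X G) \<le> gsupnorm M X G"
  unfolding gsupnorm_def by (rule cSUP_upper[OF assms bdd_above_finite]) (simp add: finite_bin01)

locale binary_random_vector = prob_space M for M :: "'a measure" +
  fixes X :: "'a \<Rightarrow> 'd::finite \<Rightarrow> nat"
  assumes X_rv: "X \<in> measurable M (count_space bin01)"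
begin

lemma Gamma_eq_sum:
  "Gamma M X $ A $ B = (\<Sum>a\<in>bin01. prob {\<omega> \<in> space M. X \<omega> = a} * (eA M X A a * eA M X B a))"
  unfolding Gamma_def
  using integral_finite_valued[OF X_rv finite_bin01, of "\<lambda>a. eA M X A a * eA M X B a"] by simp

lemma muvec_eq_sum: "muvec M X G = (\<Sum>a\<in>bin01. prob {\<omega> \<in> space M. X \<omega> = a} *\<^sub>R gvec M X G a)"
  unfolding muvec_def by (rule integral_finite_valued[OF X_rv finite_bin01])

lemma quadratic_form_Gamma:
  "\<beta> \<bullet> (Gamma M X *v \<beta>) = (\<Sum>a\<in>bin01. prob {\<omega> \<in> space M. X \<omega> = a} * (\<beta> \<bullet> evec M X a)\<^sup>2)"
proof -
  define q where "q a = prob {\<omega> \<in> space M. X \<omega> = a}" for a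
  have "\<beta> \<bullet> (Gamma M X *v \<beta>)
      = (\<Sum>A\<in>UNIV. \<Sum>B\<in>UNIV. \<Sum>a\<in>bin01. q a * ((\<beta> $ A * eA M X A a) * (\<beta> $ B * eA M X B a)))"
    by (simp add: q_def inner_vec_def matrix_vector_mult_def Gamma_eq_sum
        sum_distrib_left sum_distrib_right mult_ac)
  also have "\<dots> = (\<Sum>a\<in>bin01. \<Sum>A\<in>UNIV. \<Sum>B\<in>UNIV. q a * ((\<beta> $ A * eA M X A a) * (\<beta> $ B * eA M X B a)))"
    by (simp add: sum.swap[of _ bin01])
  also have "\<dots> = (\<Sum>a\<in>bin01. q a * (\<Sum>A\<in>UNIV. \<beta> $ A * eA M X A a)\<^sup>2)"
    unfolding power2_eq_square sum_product by (simp only: sum_distrib_left)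
  finally show ?thesis
    by (simp add: q_def inner_vec_def evec_def)
qed

lemma evec_spanning:
  assumes pd: "\<And>v. v \<noteq> 0 \<Longrightarrow> 0 < v \<bullet> (Gamma M X *v v)"
  obtains \<beta> where "\<And>a. a \<in> bin01 \<Longrightarrow> \<beta> \<bullet> evec M X a = G a"
proof -
  define K :: "real^('d set)^('d set)" where "K = (\<chi> S A. eA M X A (indicator S))"
  have K_row: "(K *v \<beta>) $ {j. a j = 1} = \<beta> \<bullet> evec M X a" if "a \<in> bin01" for \<beta> a
    using indicator_ones_eq[OF that]
    by (simp add: K_def matrix_vector_mult_def inner_vec_def evec_def mult.commute)
  have "invertible K"
    unfolding invertible_left_inverse matrix_left_invertible_ker
  proof (intro allI impI)
    fix \<beta> assume "K *v \<beta> = 0"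
    then have "\<beta> \<bullet> evec M X a = 0" if "a \<in> bin01" for a
      using K_row[OF that, of \<beta>] by simp
    then have "\<beta> \<bullet> (Gamma M X *v \<beta>) = 0"
      by (simp add: quadratic_form_Gamma)
    then show "\<beta> = 0"
      using pd by (metis less_irrefl)
  qed
  define \<beta> where "\<beta> = matrix_inv K *v (\<chi> S. G (indicator S))"
  have "\<beta> \<bullet> evec M X a = G a" if "a \<in> bin01" for a
  proof -
    have "\<beta> \<bullet> evec M X a = (\<chi> S. G (indicator S)) $ {j. a j = 1}"
      using K_row[OF that, of \<beta>] by (simp add: \<beta>_def matrix_inv_cancel \<open>invertible K\<close>)
    also have "\<dots> = G a"
      by (simp only: vec_lambda_beta indicator_ones_eq[OF that])
    finally show ?thesis .
  qed
  then show ?thesis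
    using that by blast
qed

lemma muvec_eq_Gamma_mult:
  assumes "\<And>a. a \<in> bin01 \<Longrightarrow> \<beta> \<bullet> evec M X a = G a"
  shows "muvec M X G = Gamma M X *v \<beta>"
proof (rule vec_eq_iff[THEN iffD2], rule allI)
  fix A
  define q where "q a = prob {\<omega> \<in> space M. X \<omega> = a}" for a
  have "muvec M X G $ A = (\<Sum>a\<in>bin01. q a * (eA M X A a * (\<beta> \<bullet> evec M X a)))"
    using assms by (simp add: q_def muvec_eq_sum gvec_def)
  also have "\<dots> = (\<Sum>B\<in>UNIV. (\<Sum>a\<in>bin01. q a * (eA M X A a * eA M X B a)) * \<beta> $ B)"
    by (simp add: inner_vec_def evec_def sum_distrib_left sum_distrib_right sum.swap[of _ bin01] mult_ac)
  also have "\<dots> = (Gamma M X *v \<beta>) $ A"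
    by (simp add: q_def matrix_vector_mult_def Gamma_eq_sum mult.commute)
  finally show "muvec M X G $ A = (Gamma M X *v \<beta>) $ A" .
qed

lemma eq_inner_evec_Gamma_inv_muvec:
  assumes pd: "\<And>v. v \<noteq> 0 \<Longrightarrow> 0 < v \<bullet> (Gamma M X *v v)" and "x \<in> bin01"
  shows "G x = (matrix_inv (Gamma M X) *v muvec M X G) \<bullet> evec M X x"
proof -
  obtain \<beta> where \<beta>: "\<And>a. a \<in> bin01 \<Longrightarrow> \<beta> \<bullet> evec M X a = G a"
    using evec_spanning[OF pd] by blast
  have "matrix_inv (Gamma M X) *v muvec M X G = \<beta>"
    using muvec_eq_Gamma_mult[OF \<beta>] matrix_inv_cancel(2)[OF invertible_if_pos_def[OF pd]] by metis
  then show ?thesis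
    using \<beta>[OF \<open>x \<in> bin01\<close>] by simp
qed

lemma abs_Ghat_minus_le:
  assumes sym: "transpose (Gamma M X) = Gamma M X"
    and pd: "\<And>v. v \<noteq> 0 \<Longrightarrow> 0 < v \<bullet> (Gamma M X *v v)" and "x \<in> bin01"
  shows "\<bar>Ghat M X G n Xs x \<omega> - G x\<bar>
    \<le> norm ((1 / n) *\<^sub>R (\<Sum>i = 1..n. gvec M X G (Xs i \<omega>)) - muvec M X G)
      * norm (evec M X x) / lambda_min (Gamma M X)"
proof -
  define D where "D = (1 / n) *\<^sub>R (\<Sum>i = 1..n. gvec M X G (Xs i \<omega>)) - muvec M X G"
  have "Ghat M X G n Xs x \<omega> - G x = (matrix_inv (Gamma M X) *v D) \<bullet> evec M X x"
    using eq_inner_evec_Gamma_inv_muvec[OF pd \<open>x \<in> bin01\<close>, of G]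
    by (simp add: Ghat_def D_def matrix_vector_mult_diff_distrib inner_diff_left)
  also have "\<bar>\<dots>\<bar> \<le> norm (matrix_inv (Gamma M X) *v D) * norm (evec M X x)"
    by (rule Cauchy_Schwarz_ineq2)
  also have "\<dots> \<le> norm D / lambda_min (Gamma M X) * norm (evec M X x)"
    by (intro mult_right_mono norm_matrix_inv_mult_le[OF sym pd] norm_ge_zero)
  finally show ?thesis
    by (simp add: D_def)
qed

lemma prob_abs_Ghat_minus_gt:
  assumes sym: "transpose (Gamma M X) = Gamma M X"
    and pd: "\<And>v. v \<noteq> 0 \<Longrightarrow> 0 < v \<bullet> (Gamma M X *v v)"
    and indep: "indep_vars (\<lambda>_. count_space bin01) Xs {1..n}"
    and ident: "\<And>i. i \<in> {1..n} \<Longrightarrow> distr M (count_space bin01) (Xs i) = distr M (count_space bin01) X"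
    and "1 \<le> n" "x \<in> bin01" "0 \<le> \<epsilon>" "0 < gsupnorm M X G" "0 < norm (evec M X x)"
  shows "prob {\<omega> \<in> space M. \<epsilon> < \<bar>Ghat M X G n Xs x \<omega> - G x\<bar>}
    \<le> exp (1 / 6 - n * (\<epsilon> * lambda_min (Gamma M X) / (gsupnorm M X G * norm (evec M X x)))\<^sup>2 / 8)"
proof -
  define c where "c = gsupnorm M X G"
  define e where "e = norm (evec M X x)"
  define lmin where "lmin = lambda_min (Gamma M X)"
  define t where "t = \<epsilon> * lmin / e"
  have "0 < lmin"
    unfolding lmin_def using sym pd by (rule lambda_min_pos)
  have "0 < c" "0 < e"
    using assms by (simp_all add: c_def e_def)
  have "0 \<le> t"
    using \<open>0 \<le> \<epsilon>\<close> \<open>0 < lmin\<close> \<open>0 < e\<close> by (simp add: t_def)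
  let ?D = "{\<omega> \<in> space M. t < norm ((1 / n) *\<^sub>R (\<Sum>i = 1..n. gvec M X G (Xs i \<omega>)) - muvec M X G)}"
  note deviation = prob_sample_mean_deviation[OF finite_bin01 X_rv indep _ \<open>1 \<le> n\<close> \<open>0 < c\<close> \<open>0 \<le> t\<close>,
      where f = "gvec M X G", folded muvec_def,
      OF ident gvec_minus_muvec_le_gsupnorm[where M = M and X = X and G = G, folded c_def]]
  have "{\<omega> \<in> space M. \<epsilon> < \<bar>Ghat M X G n Xs x \<omega> - G x\<bar>} \<subseteq> ?D"
  proof (intro Collect_mono impI conjI; elim conjE)
    fix \<omega> assume "\<omega> \<in> space M" "\<epsilon> < \<bar>Ghat M X G n Xs x \<omega> - G x\<bar>"
    then have "\<epsilon> < norm ((1 / n) *\<^sub>R (\<Sum>i = 1..n. gvec M X G (Xs i \<omega>)) - muvec M X G) * e / lmin"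
      using abs_Ghat_minus_le[OF sym pd \<open>x \<in> bin01\<close>, of G n Xs \<omega>]
      unfolding e_def lmin_def by linarith
    then show "t < norm ((1 / n) *\<^sub>R (\<Sum>i = 1..n. gvec M X G (Xs i \<omega>)) - muvec M X G)"
      using \<open>0 < lmin\<close> \<open>0 < e\<close> by (simp add: t_def field_simps)
  qed simp_all
  then have "prob {\<omega> \<in> space M. \<epsilon> < \<bar>Ghat M X G n Xs x \<omega> - G x\<bar>} \<le> exp (1 / 6 - n * (t / c)\<^sup>2 / 8)"
    using deviation finite_measure_mono order_trans by blast
  then show ?thesis
    by (simp add: t_def c_def e_def lmin_def mult.commute)
qed

end

theorem theorem4:
  fixes M :: "'a measure"
    and X :: "'a \<Rightarrow> ('d::finite \<Rightarrow> nat)"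
    and Xs :: "nat \<Rightarrow> 'a \<Rightarrow> ('d \<Rightarrow> nat)"
    and G :: "('d \<Rightarrow> nat) \<Rightarrow> real"
    and n :: nat and x :: "'d \<Rightarrow> nat" and \<epsilon> :: real
  assumes "prob_space M"
    and X_rv: "X \<in> measurable M (count_space bin01)"
    and full_support: "\<And>y. y \<in> bin01 \<Longrightarrow> measure M {\<omega> \<in> space M. X \<omega> = y} > 0"
    and Xs_rv: "\<And>i. i \<in> {1..n} \<Longrightarrow> Xs i \<in> measurable M (count_space bin01)"
    and Xs_indep: "prob_space.indep_vars M (\<lambda>_. count_space bin01) Xs {1..n}"
    and Xs_ident: "\<And>i. i \<in> {1..n} \<Longrightarrow>
                     distr M (count_space bin01) (Xs i) = distr M (count_space bin01) X"
    and Gamma_sym: "transpose (Gamma M X) = Gamma M X"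
    and Gamma_pd: "\<And>v. v \<noteq> 0 \<Longrightarrow> v \<bullet> (Gamma M X *v v) > 0"
    and n_pos: "n \<ge> 1"
    and x_in: "x \<in> bin01"
    and eps_nonneg: "0 \<le> \<epsilon>"
    and eps_le: "\<epsilon> \<le> gsupnorm M X G * norm (evec M X x) / lambda_min (Gamma M X)"
  shows "measure M {\<omega> \<in> space M. \<bar>Ghat M X G n Xs x \<omega> - G x\<bar> > \<epsilon>}
           \<le> exp (- (real n / 8) *
                   (\<epsilon> * lambda_min (Gamma M X) / (gsupnorm M X G * norm (evec M X x)))\<^sup>2 + 1 / 4)"
proof -
  interpret binary_random_vector M X
    using assms(1) X_rv by (rule binary_random_vector.intro[OF _ binary_random_vector_axioms.intro])
  show ?thesis
  proof (cases "gsupnorm M X G * norm (evec M X x) = 0")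
    case True
    \<comment> \<open>Division by zero yields 0, so the bound degenerates to exp(1/4) \<ge> 1.\<close>
    show ?thesis
      unfolding True by (rule order_trans[OF prob_le_1]) simp
  next
    case False
    moreover have "0 \<le> gsupnorm M X G"
      using gvec_minus_muvec_le_gsupnorm[OF x_in] norm_ge_zero order_trans by blast
    ultimately have "0 < gsupnorm M X G" "0 < norm (evec M X x)"
      by (auto simp: order.strict_iff_order)
    then have "prob {\<omega> \<in> space M. \<epsilon> < \<bar>Ghat M X G n Xs x \<omega> - G x\<bar>} \<le> exp (1 / 6 -
        n * (\<epsilon> * lambda_min (Gamma M X) / (gsupnorm M X G * norm (evec M X x)))\<^sup>2 / 8)"
      by (intro prob_abs_Ghat_minus_gt Gamma_sym Gamma_pd Xs_indep Xs_ident n_pos x_in eps_nonneg)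
    then show ?thesis
      by (rule order_trans) simp
  qed
qed

end
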